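(* Let $f\in R(A_2)$, $g\in R(A_1^* )$, $k\in K_2$, let $x\in D_2=D(A_2)\cap D(A_1^* )$ be the unique solution of $A_2x=f$, $A_1^*x=g$, $\pi_2x=k$, and let $\tilde x:=k+\tilde x_\perp$ with some $\tilde x_\perp\in K_2^{\perp}$ (orthogonal complement in $H_2$). Let $e:=x-\tilde x$, $e_{A_1}:=\pi_{A_1}e$, $e_{A_2^*}:=\pi_{A_2^*}e$. Then: (i) $e=x_f+x_g-\tilde x_\perp=e_{A_1}+e_{A_2^*}\in R(A_1)\oplus R(A_2^* )=K_2^\perp$, $\pi_2e=0$, and $\|e\|^2_{H_2}=\|e_{A_1}\|^2_{H_2}+\|e_{A_2^*}\|^2_{H_2}$; (ii) $e_{A_1}=x_g-\pi_{A_1}\tilde x=x_g-\pi_{A_1}\tilde x_\perp$ satisfies $$\|e_{A_1}\|_{H_2}=\min_{\zeta\in D(A_1^* )}\big(c_1\|A_1^*\zeta-g\|_{H_1}+\|\zeta-\tilde x\|_{H_2}\big)=\min_{\zeta\in D(A_1^* )}\big(c_1\|A_1^*\zeta-g\|_{H_1}+\|\zeta-\tilde x_\perp\|_{H_2}\big),$$ the minima being attained at $\hat\zeta:=e_{A_1}+\tilde x=x-\pi_{N(A_1^* )}e$ and $\hat\zeta_\perp:=e_{A_1}+\tilde x_\perp=x-k-\pi_{N(A_1^* )}e$, both in $D(A_1^* )$ with $A_1^*\hat\zeta=A_1^*\hat\zeta_\perp=g$; (iii) $e_{A_2^*}=x_f-\pi_{A_2^*}\tilde x=x_f-\pi_{A_2^*}\tilde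 x_\perp$ satisfies $$\|e_{A_2^*}\|_{H_2}=\min_{\xi\in D(A_2)}\big(c_2\|A_2\xi-f\|_{H_3}+\|\xi-\tilde x\|_{H_2}\big)=\min_{\xi\in D(A_2)}\big(c_2\|A_2\xi-f\|_{H_3}+\|\xi-\tilde x_\perp\|_{H_2}\big),$$ the minima being attained at $\hat\xi:=e_{A_2^*}+\tilde x=x-\pi_{N(A_2)}e$ and $\hat\xi_\perp:=e_{A_2^*}+\tilde x_\perp=x-k-\pi_{N(A_2)}e$, both in $D(A_2)$ with $A_2\hat\xi=A_2\hat\xi_\perp=f$.
   Context: Let $H_0,\dots,H_4$ be Hilbert spaces and, for $\ell=0,\dots,3$, $A_\ell:D(A_\ell)\subset H_\ell\to H_{\ell+1}$ densely defined closed linear operators with Hilbert space adjoints $A_\ell^*$, satisfying $R(A_\ell)\subset N(A_{\ell+1})$ for $\ell=0,1,2$. Standing assumption: $R(A_1)$ and $R(A_2)$ are closed and $K_2$ is finite dimensional. $K_2:=N(A_2)\cap N(A_1^* )$, $\pi_2:H_2\to K_2$ orthogonal projector; $\pi_{A_1}$, $\pi_{A_2^*}$ orthogonal projectors of $H_2$ onto $R(A_1)$, $R(A_2^* )$; $\pi_{N(A_1^* )}:=1-\pi_{A_1}$, $\pi_{N(A_2)}:=1-\pi_{A_2^*}$. $x_f:=(A_2|_{D(A_2)\cap R(A_2^* )})^{-1}f$, $x_g:=(A_1^*|_{D(A_1^* )\cap R(A_1)})^{-1}g$. $c_\ell\in(0,\infty)$ is the best constant with $\|x\|_{H_\ell}\le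 c_\ell\|A_\ell x\|_{H_{\ell+1}}$ for $x\in D(A_\ell)\cap R(A_\ell^* )$. *)

theory Defs
  imports "HOL-Analysis.Analysis"
begin

text \<open>Unbounded linear operators between real Hilbert spaces are represented by a
  domain D and a function A (only its values on D matter).\<close>

definition linear_on :: "'a::real_vector set \<Rightarrow> ('a \<Rightarrow> 'b::real_vector) \<Rightarrow> bool" where
  "linear_on D A \<longleftrightarrow> subspace D \<and>
     (\<forall>x\<in>D. \<forall>y\<in>D. A (x + y) = A x + A y) \<and> (\<forall>c. \<forall>x\<in>D. A (c *\<^sub>R x) = c *\<^sub>R A x)"

definition dd_closed_op :: "'a::real_normed_vector set \<Rightarrow> ('a \<Rightarrow> 'b::real_normed_vector) \<Rightarrow> bool" where
  "dd_closed_op D A \<longleftrightarrow> linear_on D A \<and> closure D = UNIV \<and> closed {(x, A x) | x. x \<in> D}"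

definition adj_dom :: "'a::real_inner set \<Rightarrow> ('a \<Rightarrow> 'b::real_inner) \<Rightarrow> 'b set" where
  "adj_dom D A = {y. \<exists>z. \<forall>x\<in>D. inner (A x) y = inner x z}"

definition adj :: "'a::real_inner set \<Rightarrow> ('a \<Rightarrow> 'b::real_inner) \<Rightarrow> 'b \<Rightarrow> 'a" where
  "adj D A y = (THE z. \<forall>x\<in>D. inner (A x) y = inner x z)"

definition ran_op :: "'a set \<Rightarrow> ('a \<Rightarrow> 'b) \<Rightarrow> 'b set" where
  "ran_op D A = A ` D"

definition ker_op :: "'a set \<Rightarrow> ('a \<Rightarrow> 'b::zero) \<Rightarrow> 'a set" where
  "ker_op D A = {x \<in> D. A x = 0}"

definition oproj :: "'a::real_inner set \<Rightarrow> 'a \<Rightarrow> 'a" where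
  "oproj S x = (THE p. p \<in> S \<and> (\<forall>s\<in>S. inner (x - p) s = 0))"

definition fp_const :: "'a::real_inner set \<Rightarrow> ('a \<Rightarrow> 'b::real_inner) \<Rightarrow> real" where
  "fp_const D A = Inf {c. 0 < c \<and>
     (\<forall>x \<in> D \<inter> ran_op (adj_dom D A) (adj D A). norm x \<le> c * norm (A x))}"

end

theory Submission
  imports Defs
begin

(*
  Through the closed range theorem (proved here by a Baire category argument), the closed ranges
  of A1 and A2 give closed ranges of the adjoints A1s and A2s and Friedrichs inequalities, and A1s
  satisfies on D(A1s) \<inter> R(A1) the same inequality as A1, with the best constant c1. Since R(A1)
  and R(A2s) are closed, mutually orthogonal, and K2 = R(A1)\<^sup>\<bottom> \<inter> R(A2s)\<^sup>\<bottom>, every element of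
  K2\<^sup>\<bottom> is the sum of its projections onto the two ranges; applied to x - k this identifies these
  projections with xg and xf, and applied to e it gives the Pythagorean splitting.

  For the estimate of eA1 = \<pi>A1 e, write e = (x - \<zeta>) + (\<zeta> - xt). The projection of the first
  summand lies in D(A1s) \<inter> R(A1) and is mapped by A1s to g - A1s \<zeta>, so its norm is at most
  c1 |A1s \<zeta> - g|; the projection of the second has norm at most |\<zeta> - xt|. The bound is attained
  at \<zeta> = eA1 + xt, which differs from x by an element of N(A1s) = R(A1)\<^sup>\<bottom>. The same argument
  with A2 and R(A2s) gives the estimate of eA2s.
*)

section \<open>Orthogonal projection onto closed subspaces\<close>

lemma Cauchy_if_norm_diff_le_null:
  fixes s :: "nat \<Rightarrow> 'a::real_normed_vector"
  assumes \<delta>: "\<delta> \<longlonglongrightarrow> 0" and le: "\<And>m n. norm (s m - s n) \<le> \<delta> m + \<delta> n"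
  shows "Cauchy s"
proof (rule CauchyI)
  fix e :: real assume "0 < e"
  then obtain N where N: "\<And>n. n \<ge> N \<Longrightarrow> norm (\<delta> n) < e / 2"
    using \<delta> LIMSEQ_D[of \<delta> 0 "e / 2"] by auto
  have "norm (s m - s n) < e" if "N \<le> m" "N \<le> n" for m n
    using le[of m n] N[OF that(1)] N[OF that(2)] by simp
  then show "\<exists>N. \<forall>m\<ge>N. \<forall>n\<ge>N. norm (s m - s n) < e" by blast
qed

lemma parallelogram_law:
  fixes a b :: "'a::real_inner"
  shows "(norm (a - b))\<^sup>2 + (norm (a + b))\<^sup>2 = 2 * (norm a)\<^sup>2 + 2 * (norm b)\<^sup>2"
  unfolding power2_norm_eq_inner by (simp add: inner_diff inner_add algebra_simps inner_commute)

lemma closest_point_exists_convex: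
  fixes S :: "'a::{real_inner,complete_space} set"
  assumes "convex S" "closed S" "S \<noteq> {}"
  shows "\<exists>p\<in>S. \<forall>q\<in>S. norm (x - p) \<le> norm (x - q)"
proof -
  define d where "d = infdist x S"
  have d_le: "d \<le> norm (x - q)" if "q \<in> S" for q
    using infdist_le[OF that, of x] by (simp add: d_def dist_norm)
  have "\<exists>s\<in>S. (norm (x - s))\<^sup>2 < d\<^sup>2 + 1 / Suc n" for n
  proof -
    have "d < sqrt (d\<^sup>2 + 1 / Suc n)"
      using infdist_nonneg[of x S] real_less_rsqrt[of d "d\<^sup>2 + 1 / Suc n"] by (simp add: d_def)
    then obtain s where "s \<in> S" "dist x s < sqrt (d\<^sup>2 + 1 / Suc n)"
      using cINF_less_iff[of S "dist x"] assms(3) by (auto simp: d_def infdist_notempty)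
    moreover have "(norm (x - s))\<^sup>2 < (sqrt (d\<^sup>2 + 1 / Suc n))\<^sup>2"
      using calculation(2) by (intro power_strict_mono) (auto simp: dist_norm)
    ultimately show ?thesis by auto
  qed
  then obtain s where s: "\<And>n. s n \<in> S" "\<And>n. (norm (x - s n))\<^sup>2 < d\<^sup>2 + 1 / Suc n"
    by metis
  have "norm (s m - s n) \<le> sqrt (2 / Suc m) + sqrt (2 / Suc n)" for m n
  proof -
    define mid where "mid = (1/2) *\<^sub>R s m + (1/2) *\<^sub>R s n"
    have "mid \<in> S"
      unfolding mid_def using assms(1) s(1) by (intro convexD) auto
    moreover have "(x - s n) + (x - s m) = 2 *\<^sub>R (x - mid)"
      by (simp add: mid_def algebra_simps flip: scaleR_2)
    ultimately have "2 * d \<le> norm ((x - s n) + (x - s m))"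
      using d_le by simp
    then have "(2 * d)\<^sup>2 \<le> (norm ((x - s n) + (x - s m)))\<^sup>2"
      using infdist_nonneg[of x S] by (intro power_mono) (auto simp: d_def)
    then have "(norm (s m - s n))\<^sup>2 \<le> 2 / Suc m + 2 / Suc n"
      using parallelogram_law[of "x - s n" "x - s m"] s(2)[of m] s(2)[of n]
      by (simp add: power_mult_distrib norm_minus_commute)
    then have "norm (s m - s n) \<le> sqrt (2 / Suc m + 2 / Suc n)"
      using real_le_rsqrt by blast
    also have "\<dots> \<le> sqrt (2 / Suc m) + sqrt (2 / Suc n)"
      by (rule sqrt_add_le_add_sqrt) auto
    finally show ?thesis .
  qed
  moreover have "(\<lambda>n. sqrt (2 / Suc n)) \<longlonglongrightarrow> 0"
    using tendsto_real_sqrt[OF tendsto_mult_right_zero[OF LIMSEQ_inverse_real_of_nat, of 2]]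
    by (simp add: divide_inverse)
  ultimately obtain p where p: "s \<longlonglongrightarrow> p"
    using Cauchy_if_norm_diff_le_null Cauchy_convergent_iff convergent_def by metis
  have "p \<in> S" using assms(2) s(1) p closed_sequentially by blast
  have "(\<lambda>n. (norm (x - s n))\<^sup>2) \<longlonglongrightarrow> (norm (x - p))\<^sup>2"
    by (intro tendsto_intros p)
  moreover have "(\<lambda>n. d\<^sup>2 + 1 / Suc n) \<longlonglongrightarrow> d\<^sup>2 + 0"
    using LIMSEQ_inverse_real_of_nat by (intro tendsto_add tendsto_const) (simp add: inverse_eq_divide)
  ultimately have "(norm (x - p))\<^sup>2 \<le> d\<^sup>2 + 0"
    by (rule LIMSEQ_le) (use s(2) less_imp_le in blast)
  then have "norm (x - p) \<le> d"
    using infdist_nonneg[of x S] unfolding d_def by (simp add: power2_le_iff_abs_le)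
  then show ?thesis using \<open>p \<in> S\<close> d_le by (meson order_trans)
qed

lemma orthogonal_comp_iff: "x \<in> S\<^sup>\<bottom> \<longleftrightarrow> (\<forall>s\<in>S. inner x s = 0)"
  unfolding orthogonal_comp_def orthogonal_def by (simp add: inner_commute)

lemma closed_orthogonal_comp: "closed (S\<^sup>\<bottom>)"
proof -
  have "S\<^sup>\<bottom> = (\<Inter>s\<in>S. {x. inner x s = 0})"
    by (auto simp: orthogonal_comp_iff)
  then show ?thesis
    by (auto intro!: closed_Collect_eq continuous_intros)
qed

lemma closest_point_in_subspace_orthogonal:
  fixes S :: "'a::real_inner set"
  assumes "subspace S" "p \<in> S" and closest: "\<forall>q\<in>S. norm (x - p) \<le> norm (x - q)"
  shows "x - p \<in> S\<^sup>\<bottom>"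
  unfolding orthogonal_comp_iff
proof
  fix t assume "t \<in> S"
  define a where "a = inner (x - p) t"
  define b where "b = inner t t"
  have expand: "(norm (w - c *\<^sub>R t))\<^sup>2 = (norm w)\<^sup>2 - 2 * c * inner w t + c\<^sup>2 * inner t t"
    for w :: 'a and c :: real
    unfolding power2_norm_eq_inner by (simp add: inner_diff_left inner_diff_right inner_commute[of t w] power2_eq_square algebra_simps)
  show "a = 0"
  proof (rule ccontr)
    assume "a \<noteq> 0"
    then have "t \<noteq> 0" by (auto simp: a_def)
    then have "b > 0" by (simp add: b_def)
    have "p + (a / b) *\<^sub>R t \<in> S"
      using assms(1,2) \<open>t \<in> S\<close> by (simp add: subspace_add subspace_scale)
    then have "norm (x - p) \<le> norm ((x - p) - (a / b) *\<^sub>R t)"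
      using closest by (metis diff_diff_eq)
    then have "(norm (x - p))\<^sup>2 \<le> (norm ((x - p) - (a / b) *\<^sub>R t))\<^sup>2"
      by (simp add: power_mono)
    also have "\<dots> = (norm (x - p))\<^sup>2 - 2 * (a / b) * a + (a / b)\<^sup>2 * b"
      using expand[of "x - p" "a / b"] unfolding a_def[symmetric] b_def[symmetric] .
    also have "\<dots> = (norm (x - p))\<^sup>2 - a\<^sup>2 / b"
      using \<open>b > 0\<close> by (simp add: field_simps power2_eq_square)
    finally have "a\<^sup>2 / b \<le> 0" by simp
    with \<open>b > 0\<close> \<open>a \<noteq> 0\<close> show False
      by (simp add: divide_le_0_iff)
  qed
qed

lemma hilbert_projection_exists:
  fixes S :: "'a::{real_inner,complete_space} set"
  assumes "subspace S" "closed S"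
  shows "\<exists>p\<in>S. x - p \<in> S\<^sup>\<bottom>"
  using closest_point_exists_convex[OF subspace_imp_convex[OF assms(1)] assms(2)]
    subspace_0[OF assms(1)] closest_point_in_subspace_orthogonal[OF assms(1)] by blast

lemma oproj_eqI:
  assumes "subspace S" "p \<in> S" "x - p \<in> S\<^sup>\<bottom>"
  shows "oproj S x = p"
  unfolding oproj_def
proof (rule the_equality)
  show "p \<in> S \<and> (\<forall>s\<in>S. inner (x - p) s = 0)"
    using assms by (simp add: orthogonal_comp_iff)
next
  fix q assume q: "q \<in> S \<and> (\<forall>s\<in>S. inner (x - q) s = 0)"
  have "p - q \<in> S"
    using assms q by (simp add: subspace_diff)
  moreover have "x - q \<in> S\<^sup>\<bottom>"
    using q by (simp add: orthogonal_comp_iff)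
  then have "(x - q) - (x - p) \<in> S\<^sup>\<bottom>"
    using assms(3) by (rule subspace_diff[OF subspace_orthogonal_comp])
  then have "p - q \<in> S\<^sup>\<bottom>" by simp
  ultimately have "p - q \<in> S \<inter> S\<^sup>\<bottom>" by blast
  then show "q = p"
    unfolding orthogonal_Int_0[OF assms(1)] by simp
qed

context
  fixes S :: "'a::{real_inner,complete_space} set"
  assumes subspace: "subspace S" and closed: "closed S"
begin

lemma oproj_in: "oproj S x \<in> S"
  using hilbert_projection_exists[OF subspace closed] oproj_eqI[OF subspace] by metis

lemma oproj_orthogonal: "x - oproj S x \<in> S\<^sup>\<bottom>"
  using hilbert_projection_exists[OF subspace closed] oproj_eqI[OF subspace] by metis

lemma linear_oproj: "linear (oproj S)"
proof
  fix x y :: 'a and c :: real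
  show "oproj S (x + y) = oproj S x + oproj S y"
  proof (rule oproj_eqI[OF subspace])
    show "oproj S x + oproj S y \<in> S"
      using oproj_in subspace by (simp add: subspace_add)
    have "(x - oproj S x) + (y - oproj S y) \<in> S\<^sup>\<bottom>"
      using oproj_orthogonal by (simp add: subspace_add[OF subspace_orthogonal_comp])
    then show "x + y - (oproj S x + oproj S y) \<in> S\<^sup>\<bottom>"
      by (simp add: algebra_simps)
  qed
  show "oproj S (c *\<^sub>R x) = c *\<^sub>R oproj S x"
  proof (rule oproj_eqI[OF subspace])
    show "c *\<^sub>R oproj S x \<in> S"
      using oproj_in subspace by (simp add: subspace_scale)
    have "c *\<^sub>R (x - oproj S x) \<in> S\<^sup>\<bottom>"
      using oproj_orthogonal by (simp add: subspace_scale[OF subspace_orthogonal_comp])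
    then show "c *\<^sub>R x - c *\<^sub>R oproj S x \<in> S\<^sup>\<bottom>"
      by (simp add: scaleR_diff_right)
  qed
qed

lemma norm_oproj_le: "norm (oproj S x) \<le> norm x"
proof -
  have "orthogonal (oproj S x) (x - oproj S x)"
    using oproj_in oproj_orthogonal by (simp add: orthogonal_comp_def)
  from norm_add_Pythagorean[OF this]
  have "(norm x)\<^sup>2 = (norm (oproj S x))\<^sup>2 + (norm (x - oproj S x))\<^sup>2" by simp
  then have "(norm (oproj S x))\<^sup>2 \<le> (norm x)\<^sup>2" by simp
  then show ?thesis
    by (rule power2_le_imp_le) simp
qed

lemma orthogonal_comp_orthogonal_comp_closed: "S\<^sup>\<bottom>\<^sup>\<bottom> = S"
proof
  show "S\<^sup>\<bottom>\<^sup>\<bottom> \<subseteq> S"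
  proof
    fix z assume z: "z \<in> S\<^sup>\<bottom>\<^sup>\<bottom>"
    have "oproj S z \<in> S\<^sup>\<bottom>\<^sup>\<bottom>"
      using oproj_in orthogonal_comp_subset by blast
    then have "z - oproj S z \<in> S\<^sup>\<bottom>\<^sup>\<bottom>"
      using z by (rule subspace_diff[OF subspace_orthogonal_comp, rotated])
    then have "z - oproj S z = 0"
      using oproj_orthogonal[of z] orthogonal_Int_0[OF subspace_orthogonal_comp, of S] by blast
    then show "z \<in> S" using oproj_in by (metis eq_iff_diff_eq_0)
  qed
qed (rule orthogonal_comp_subset)

end

lemma oproj_eq_0: "subspace S \<Longrightarrow> x \<in> S\<^sup>\<bottom> \<Longrightarrow> oproj S x = 0"
  by (rule oproj_eqI) (simp_all add: subspace_0)

section \<open>Linear operators on subspaces and their adjoints\<close>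

lemma linear_on_subspace: "linear_on D A \<Longrightarrow> subspace D"
  by (simp add: linear_on_def)

lemma linear_on_add: "linear_on D A \<Longrightarrow> x \<in> D \<Longrightarrow> y \<in> D \<Longrightarrow> A (x + y) = A x + A y"
  by (simp add: linear_on_def)

lemma linear_on_scale: "linear_on D A \<Longrightarrow> x \<in> D \<Longrightarrow> A (c *\<^sub>R x) = c *\<^sub>R A x"
  by (simp add: linear_on_def)

lemma linear_on_0:
  assumes "linear_on D A" shows "A 0 = 0"
  using linear_on_scale[OF assms subspace_0[OF linear_on_subspace[OF assms]], of 0] by simp

lemma linear_on_diff:
  assumes "linear_on D A" "x \<in> D" "y \<in> D" shows "A (x - y) = A x - A y"
  using linear_on_add[OF assms(1,2), of "(-1) *\<^sub>R y"] linear_on_scale[OF assms(1,3), of "-1"]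
    subspace_scale[OF linear_on_subspace[OF assms(1)] assms(3), of "-1"] by simp

lemma subspace_ran_op:
  assumes lin: "linear_on D A" shows "subspace (ran_op D A)"
proof -
  have D: "subspace D" using linear_on_subspace[OF lin] .
  have "0 \<in> A ` D"
    using image_eqI[of 0 A 0] linear_on_0[OF lin] subspace_0[OF D] by simp
  moreover have "A x + A y \<in> A ` D" if "x \<in> D" "y \<in> D" for x y
    using image_eqI[of _ A "x + y"] linear_on_add[OF lin that] subspace_add[OF D that] by simp
  moreover have "c *\<^sub>R A x \<in> A ` D" if "x \<in> D" for x c
    using image_eqI[of _ A "c *\<^sub>R x"] linear_on_scale[OF lin that] subspace_scale[OF D that] by simp
  ultimately show ?thesis
    unfolding subspace_def ran_op_def by blast
qed

lemma subspace_ker_op: "linear_on D A \<Longrightarrow> subspace (ker_op D A)"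
  unfolding subspace_def ker_op_def
  by (auto simp: linear_on_0 linear_on_add linear_on_scale
      intro: subspace_0 subspace_add subspace_scale dest: linear_on_subspace)

lemma ker_op_diff:
  "linear_on D A \<Longrightarrow> x \<in> D \<Longrightarrow> y \<in> D \<Longrightarrow> A x = A y \<Longrightarrow> x - y \<in> ker_op D A"
  by (simp add: ker_op_def linear_on_diff subspace_diff linear_on_subspace)

lemma adjI:
  fixes D :: "'a::real_inner set" and A :: "'a \<Rightarrow> 'b::real_inner"
  assumes dense: "closure D = UNIV" and z: "\<forall>x\<in>D. inner (A x) y = inner x z"
  shows "y \<in> adj_dom D A" "adj D A y = z"
proof -
  show "y \<in> adj_dom D A" using z by (auto simp: adj_dom_def)
  have "z' = z" if z': "\<forall>x\<in>D. inner (A x) y = inner x z'" for z'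
  proof -
    have "D \<subseteq> {x. inner x (z' - z) = 0}"
      using z z' by (auto simp: inner_diff_right)
    moreover have "closed {x. inner x (z' - z) = 0}"
      by (intro closed_Collect_eq continuous_intros)
    ultimately have "UNIV \<subseteq> {x. inner x (z' - z) = 0}"
      using closure_minimal dense by metis
    then have "inner (z' - z) (z' - z) = 0" by blast
    then show ?thesis by simp
  qed
  then show "adj D A y = z"
    unfolding adj_def using z by (intro the_equality) auto
qed

lemma inner_adj:
  fixes D :: "'a::real_inner set" and A :: "'a \<Rightarrow> 'b::real_inner"
  assumes dense: "closure D = UNIV" and "y \<in> adj_dom D A" "x \<in> D"
  shows "inner (A x) y = inner x (adj D A y)"
proof -
  obtain z where z: "\<forall>x\<in>D. inner (A x) y = inner x z"
    using assms(2) by (auto simp: adj_dom_def)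
  then show ?thesis
    using adjI(2)[OF dense z] assms(3) by simp
qed

lemma linear_on_adj:
  fixes D :: "'a::real_inner set" and A :: "'a \<Rightarrow> 'b::real_inner"
  assumes dense: "closure D = UNIV"
  shows "linear_on (adj_dom D A) (adj D A)"
proof -
  have add: "y1 + y2 \<in> adj_dom D A" "adj D A (y1 + y2) = adj D A y1 + adj D A y2"
    if "y1 \<in> adj_dom D A" "y2 \<in> adj_dom D A" for y1 y2
    using that
    by (auto intro!: adjI[OF dense, where z = "adj D A y1 + adj D A y2"]
        simp: inner_add_right inner_adj[OF dense])
  have scale: "c *\<^sub>R y \<in> adj_dom D A" "adj D A (c *\<^sub>R y) = c *\<^sub>R adj D A y"
    if "y \<in> adj_dom D A" for y c
    using that by (auto intro!: adjI[OF dense, where z = "c *\<^sub>R adj D A y"] simp: inner_adj[OF dense])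
  have "0 \<in> adj_dom D A"
    using adjI(1)[OF dense, of A 0 0] by simp
  then show ?thesis
    unfolding linear_on_def subspace_def using add scale by blast
qed

lemma ker_adj_eq_orthogonal_comp_ran:
  fixes D :: "'a::real_inner set" and A :: "'a \<Rightarrow> 'b::real_inner"
  assumes dense: "closure D = UNIV"
  shows "ker_op (adj_dom D A) (adj D A) = (ran_op D A)\<^sup>\<bottom>"
proof (intro set_eqI iffI)
  fix y assume "y \<in> (ran_op D A)\<^sup>\<bottom>"
  then have "\<forall>x\<in>D. inner (A x) y = inner x 0"
    by (auto simp: orthogonal_comp_iff ran_op_def inner_commute)
  then show "y \<in> ker_op (adj_dom D A) (adj D A)"
    using adjI[OF dense, of A y 0] by (simp add: ker_op_def)
next
  fix y assume "y \<in> ker_op (adj_dom D A) (adj D A)"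
  then show "y \<in> (ran_op D A)\<^sup>\<bottom>"
    using inner_adj[OF dense, of y]
    by (auto simp: ker_op_def ran_op_def orthogonal_comp_iff inner_commute[of y])
qed

lemma ker_eq_orthogonal_comp_ran_adj:
  fixes D :: "'a::{real_inner,complete_space} set" and A :: "'a \<Rightarrow> 'b::{real_inner,complete_space}"
  assumes op: "dd_closed_op D A"
  shows "ker_op D A = (ran_op (adj_dom D A) (adj D A))\<^sup>\<bottom>"
proof (intro set_eqI iffI)
  have lin: "linear_on D A" and dense: "closure D = UNIV"
    using op by (auto simp: dd_closed_op_def)
  fix z
  show "z \<in> (ran_op (adj_dom D A) (adj D A))\<^sup>\<bottom>" if z: "z \<in> ker_op D A"
  proof -
    have "inner z (adj D A y) = 0" if "y \<in> adj_dom D A" for y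
      using inner_adj[OF dense that, of z] z by (simp add: ker_op_def)
    then show ?thesis by (auto simp: ran_op_def orthogonal_comp_iff)
  qed
  assume z: "z \<in> (ran_op (adj_dom D A) (adj D A))\<^sup>\<bottom>"
  define G where "G = {(x, A x) | x. x \<in> D}"
  have "subspace G"
    using lin subspace_0[OF linear_on_subspace[OF lin]]
    by (auto simp: G_def subspace_def zero_prod_def linear_on_0 linear_on_add linear_on_scale
        intro!: exI subspace_add subspace_scale linear_on_subspace)
  moreover have "closed G"
    using op by (simp add: G_def dd_closed_op_def)
  ultimately obtain p where p: "p \<in> D" "(z, 0) - (p, A p) \<in> G\<^sup>\<bottom>"
    using hilbert_projection_exists[of G "(z, 0)"] by (auto simp: G_def)
  have adj_Ap: "inner (A x) (A p) = inner x (z - p)" if "x \<in> D" for x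
    using p(2) that by (auto simp: G_def orthogonal_comp_iff inner_commute algebra_simps)
  then have "A p \<in> adj_dom D A" "adj D A (A p) = z - p"
    using adjI[OF dense, of A "A p" "z - p"] by auto
  then have "z - p \<in> ran_op (adj_dom D A) (adj D A)"
    unfolding ran_op_def by (metis image_eqI)
  then have "inner z (z - p) = 0"
    using z by (simp add: orthogonal_comp_iff)
  then have "inner (z - p) (z - p) + inner (A p) (A p) = 0"
    using adj_Ap[OF p(1)] by (simp add: inner_diff_left)
  then have "z = p" "A p = 0"
    by (simp_all add: add_nonneg_eq_0_iff)
  then show "z \<in> ker_op D A"
    using p(1) by (simp add: ker_op_def)
qed

section \<open>The closed range theorem\<close>

lemma closed_range_dense_image_ball:
  fixes D :: "'a::real_normed_vector set" and A :: "'a \<Rightarrow> 'b::{real_normed_vector,complete_space}"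
  assumes lin: "linear_on D A" and clR: "closed (ran_op D A)"
  obtains r n where "r > 0"
    "\<And>y e. y \<in> ran_op D A \<Longrightarrow> norm y < r \<Longrightarrow> e > 0 \<Longrightarrow> \<exists>x\<in>D. norm x \<le> n \<and> norm (A x - y) < e"
proof -
  define R where "R = ran_op D A"
  define F where "F n = closure (A ` (D \<inter> cball 0 (real n)))" for n
  have FR: "F n \<subseteq> R" for n
    unfolding F_def R_def ran_op_def using clR[unfolded ran_op_def]
    by (intro closure_minimal) auto
  have "\<Union>(range F) = R"
  proof
    show "R \<subseteq> \<Union>(range F)"
    proof
      fix y assume "y \<in> R"
      then obtain x where "x \<in> D" "y = A x" by (auto simp: R_def ran_op_def)
      moreover obtain n :: nat where "norm x \<le> real n" using real_arch_simple by blast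
      ultimately show "y \<in> \<Union>(range F)"
        unfolding F_def using closure_subset by fastforce
    qed
  qed (use FR in blast)
  \<comment> \<open>Baire category theorem in the complete space R.\<close>
  moreover have "completely_metrizable_space (top_of_set R)"
    using completely_metrizable_space_closedin[OF completely_metrizable_space_euclidean] clR
    unfolding R_def closed_closedin by blast
  moreover have "closedin (top_of_set R) (F n)" for n
    using FR closed_subset unfolding F_def by (metis closed_closure)
  ultimately obtain n where "top_of_set R interior_of F n \<noteq> {}"
    using Baire_category_alt[of "top_of_set R" "range F"] interior_of_topspace[of "top_of_set R"]
      subspace_0[OF subspace_ran_op[OF lin]]
    by (fastforce simp: R_def)
  then obtain y0 where "y0 \<in> top_of_set R interior_of F n" by blast
  then obtain U where U: "openin (top_of_set R) U" "y0 \<in> U" "U \<subseteq> F n"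
    by (auto simp: interior_of_def)
  then obtain r where "r > 0" "\<forall>y\<in>R. dist y y0 < r \<longrightarrow> y \<in> U"
    unfolding openin_euclidean_subtopology_iff by blast
  then have ball: "\<And>y. y \<in> R \<Longrightarrow> dist y y0 < r \<Longrightarrow> y \<in> F n"
    using U(3) by blast
  have y0F: "y0 \<in> F n" and y0R: "y0 \<in> R"
    using U FR by blast+
  have near: "\<exists>x\<in>D. norm x \<le> real n \<and> norm (A x - z) < e" if "z \<in> F n" "e > 0" for z e
    using that unfolding F_def closure_approachable by (fastforce simp: dist_norm)
  show ?thesis
  proof (rule that[OF \<open>r > 0\<close>, of "2 * real n"])
    fix y and e :: real assume y: "y \<in> ran_op D A" "norm y < r" "e > 0"
    have "y0 + y \<in> F n"
      using y y0R subspace_add[OF subspace_ran_op[OF lin]] by (intro ball) (auto simp: R_def dist_norm)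
    then obtain x1 where x1: "x1 \<in> D" "norm x1 \<le> real n" "norm (A x1 - (y0 + y)) < e / 2"
      using near \<open>e > 0\<close> by (meson half_gt_zero)
    obtain x2 where x2: "x2 \<in> D" "norm x2 \<le> real n" "norm (A x2 - y0) < e / 2"
      using near[OF y0F] \<open>e > 0\<close> by (meson half_gt_zero)
    have "x1 - x2 \<in> D"
      using x1 x2 subspace_diff[OF linear_on_subspace[OF lin]] by blast
    moreover have "norm (x1 - x2) \<le> 2 * real n"
      using norm_triangle_ineq4[of x1 x2] x1 x2 by simp
    moreover have "A (x1 - x2) - y = (A x1 - (y0 + y)) - (A x2 - y0)"
      using linear_on_diff[OF lin x1(1) x2(1)] by simp
    then have "norm (A (x1 - x2) - y) \<le> norm (A x1 - (y0 + y)) + norm (A x2 - y0)"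
      by (metis norm_triangle_ineq4)
    then have "norm (A (x1 - x2) - y) < e"
      using x1(3) x2(3) by linarith
    ultimately show "\<exists>x\<in>D. norm x \<le> 2 * real n \<and> norm (A x - y) < e" by blast
  qed
qed

lemma closed_range_approximate_preimage:
  fixes D :: "'a::real_normed_vector set" and A :: "'a \<Rightarrow> 'b::{real_normed_vector,complete_space}"
  assumes lin: "linear_on D A" and clR: "closed (ran_op D A)"
  obtains M where "M > 0"
    "\<And>y. y \<in> ran_op D A \<Longrightarrow> \<exists>x\<in>D. norm x \<le> M * norm y \<and> norm (A x - y) \<le> norm y / 2"
proof -
  obtain r n where "r > 0" and approx:
    "\<And>y e. y \<in> ran_op D A \<Longrightarrow> norm y < r \<Longrightarrow> e > 0 \<Longrightarrow> \<exists>x\<in>D. norm x \<le> n \<and> norm (A x - y) < e"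
    using closed_range_dense_image_ball[OF lin clR] by blast
  define M where "M = 2 * (\<bar>n\<bar> + 1) / r"
  show ?thesis
  proof (rule that)
    show "M > 0" using \<open>r > 0\<close> by (simp add: M_def add_pos_nonneg)
    fix y assume y: "y \<in> ran_op D A"
    show "\<exists>x\<in>D. norm x \<le> M * norm y \<and> norm (A x - y) \<le> norm y / 2"
    proof (cases "y = 0")
      case True
      then show ?thesis
        using subspace_0[OF linear_on_subspace[OF lin]] linear_on_0[OF lin] by auto
    next
      case False
      \<comment> \<open>Rescale y into the ball of radius r, approximate it there, and scale back.\<close>
      define t where "t = r / (2 * norm y)"
      have "t > 0" using False \<open>r > 0\<close> by (simp add: t_def)
      have "t *\<^sub>R y \<in> ran_op D A"
        using y subspace_scale[OF subspace_ran_op[OF lin]] by blast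
      moreover have "norm (t *\<^sub>R y) < r"
        using False \<open>r > 0\<close> \<open>t > 0\<close> by (simp add: t_def)
      ultimately obtain x' where x': "x' \<in> D" "norm x' \<le> n" "norm (A x' - t *\<^sub>R y) < r / 4"
        using approx \<open>r > 0\<close> by (meson zero_less_divide_iff zero_less_numeral)
      define x where "x = (1 / t) *\<^sub>R x'"
      have "x \<in> D"
        unfolding x_def using subspace_scale[OF linear_on_subspace[OF lin] x'(1)] .
      moreover have "norm x \<le> M * norm y"
      proof -
        have "norm x = norm x' / t" using \<open>t > 0\<close> by (simp add: x_def)
        also have "\<dots> \<le> \<bar>n\<bar> / t" using x'(2) \<open>t > 0\<close> by (simp add: divide_right_mono)
        also have "\<dots> = 2 * \<bar>n\<bar> / r * norm y" using False by (simp add: t_def)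
        also have "\<dots> \<le> M * norm y"
          unfolding M_def using \<open>r > 0\<close> by (intro mult_right_mono divide_right_mono) auto
        finally show ?thesis .
      qed
      moreover have "norm (A x - y) \<le> norm y / 2"
      proof -
        have "A x - y = (1 / t) *\<^sub>R (A x' - t *\<^sub>R y)"
          using linear_on_scale[OF lin x'(1)] \<open>t > 0\<close> by (simp add: x_def algebra_simps)
        then have "norm (A x - y) = norm (A x' - t *\<^sub>R y) / t"
          using \<open>t > 0\<close> by simp
        also have "\<dots> \<le> (r / 4) / t"
          using x'(3) \<open>t > 0\<close> by (intro divide_right_mono) auto
        also have "\<dots> = norm y / 2"
          using False \<open>r > 0\<close> by (simp add: t_def)
        finally show ?thesis .
      qed
      ultimately show ?thesis by blast
    qed
  qed
qed

lemma convergent_partial_sums_if_summable_norm: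
  fixes u :: "nat \<Rightarrow> 'a::{real_normed_vector,complete_space}"
  assumes summable: "summable (\<lambda>k. norm (u k))"
  shows "convergent (\<lambda>N. \<Sum>k<N. u k)"
proof -
  define \<delta> where "\<delta> N = (\<Sum>k. norm (u k)) - (\<Sum>k<N. norm (u k))" for N
  have "\<delta> \<longlonglongrightarrow> 0"
    using tendsto_diff[OF tendsto_const summable_LIMSEQ[OF summable], of "\<Sum>k. norm (u k)"]
    by (simp add: \<delta>_def[abs_def])
  moreover have tail: "norm ((\<Sum>k<m. u k) - (\<Sum>k<n. u k)) \<le> \<delta> n" if "n \<le> m" for m n
  proof -
    have "norm ((\<Sum>k<m. u k) - (\<Sum>k<n. u k)) = norm (\<Sum>k\<in>{n..<m}. u k)"
      using sum_diff_nat_ivl[of 0 n m u] that by (simp add: atLeast0LessThan)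
    also have "\<dots> \<le> (\<Sum>k\<in>{n..<m}. norm (u k))"
      by (rule norm_sum)
    also have "\<dots> = (\<Sum>k<m. norm (u k)) - (\<Sum>k<n. norm (u k))"
      using sum_diff_nat_ivl[of 0 n m "\<lambda>k. norm (u k)"] that by (simp add: atLeast0LessThan)
    also have "\<dots> \<le> \<delta> n"
      using sum_le_suminf[OF summable, of "{..<m}"] by (simp add: \<delta>_def)
    finally show ?thesis .
  qed
  moreover have "0 \<le> \<delta> n" for n
    using sum_le_suminf[OF summable, of "{..<n}"] by (simp add: \<delta>_def)
  moreover have "norm ((\<Sum>k<m. u k) - (\<Sum>k<n. u k)) \<le> \<delta> m + \<delta> n" for m n
    using tail[of n m] tail[of m n] \<open>0 \<le> \<delta> m\<close> \<open>0 \<le> \<delta> n\<close>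
    by (cases "n \<le> m") (auto simp: norm_minus_commute)
  ultimately have "Cauchy (\<lambda>N. \<Sum>k<N. u k)"
    by (intro Cauchy_if_norm_diff_le_null[of \<delta>])
  then show ?thesis
    by (simp add: Cauchy_convergent_iff)
qed

lemma closed_range_bounded_preimage:
  fixes D :: "'a::{real_normed_vector,complete_space} set" and A :: "'a \<Rightarrow> 'b::{real_normed_vector,complete_space}"
  assumes lin: "linear_on D A" and clG: "closed {(x, A x) | x. x \<in> D}"
    and clR: "closed (ran_op D A)"
  obtains M where "M > 0" "\<And>y. y \<in> ran_op D A \<Longrightarrow> \<exists>x\<in>D. A x = y \<and> norm x \<le> M * norm y"
proof -
  obtain M where "M > 0" and approx:
    "\<And>y. y \<in> ran_op D A \<Longrightarrow> \<exists>x\<in>D. norm x \<le> M * norm y \<and> norm (A x - y) \<le> norm y / 2"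
    using closed_range_approximate_preimage[OF lin clR] by blast
  then obtain \<phi> where \<phi>: "\<And>y. y \<in> ran_op D A \<Longrightarrow>
      \<phi> y \<in> D \<and> norm (\<phi> y) \<le> M * norm y \<and> norm (A (\<phi> y) - y) \<le> norm y / 2"
    by metis
  have "\<exists>x\<in>D. A x = y \<and> norm x \<le> (2 * M) * norm y" if y: "y \<in> ran_op D A" for y
  proof -
    \<comment> \<open>Iterate the approximation on the residuals; the corrections form a geometric series.\<close>
    define r where "r k = ((\<lambda>z. z - A (\<phi> z)) ^^ k) y" for k
    define u where "u k = \<phi> (r k)" for k
    have r: "r k \<in> ran_op D A \<and> norm (r k) \<le> norm y * (1/2)^k" for k
    proof (induction k)
      case (Suc k)
      have "A (u k) \<in> ran_op D A"
        using \<phi> Suc.IH by (simp add: u_def ran_op_def)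
      then have "r (Suc k) \<in> ran_op D A"
        using Suc.IH subspace_diff[OF subspace_ran_op[OF lin]] by (simp add: r_def u_def)
      moreover have "norm (r (Suc k)) \<le> norm (r k) / 2"
        using \<phi>[of "r k"] Suc.IH by (simp add: r_def norm_minus_commute)
      ultimately show ?case using Suc.IH by simp
    qed (simp add: r_def y)
    have u: "u k \<in> D" "norm (u k) \<le> M * norm y * (1/2)^k" for k
    proof -
      show "u k \<in> D" using \<phi>[of "r k"] r[of k] by (simp add: u_def)
      have "norm (u k) \<le> M * norm (r k)" using \<phi>[of "r k"] r[of k] by (simp add: u_def)
      also have "\<dots> \<le> M * (norm y * (1/2)^k)"
        using r[of k] \<open>M > 0\<close> by (intro mult_left_mono) auto
      finally show "norm (u k) \<le> M * norm y * (1/2)^k" by (simp add: mult.assoc)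
    qed
    have partial: "(\<Sum>k<N. u k) \<in> D \<and> A (\<Sum>k<N. u k) = y - r N" for N
    proof (induction N)
      case (Suc N)
      then show ?case
        using u(1)[of N] subspace_add[OF linear_on_subspace[OF lin]] linear_on_add[OF lin]
        by (simp add: r_def u_def)
    qed (simp add: r_def linear_on_0[OF lin] subspace_0[OF linear_on_subspace[OF lin]])
    have geom: "(\<lambda>k. M * norm y * (1/2)^k) sums (2 * M * norm y)"
      using sums_mult[OF geometric_sums[of "1/2::real"], of "M * norm y"] by (simp add: mult_ac)
    have norm_summable: "summable (\<lambda>k. norm (u k))"
      by (rule summable_comparison_test[OF _ sums_summable[OF geom]]) (use u(2) in auto)
    then obtain x where x: "(\<lambda>N. \<Sum>k<N. u k) \<longlonglongrightarrow> x"
      using convergent_partial_sums_if_summable_norm convergent_def by blast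
    have "r \<longlonglongrightarrow> 0"
    proof (rule Lim_null_comparison)
      show "\<forall>\<^sub>F k in sequentially. norm (r k) \<le> norm y * (1/2)^k"
        using r by simp
      show "(\<lambda>k. norm y * (1/2)^k) \<longlonglongrightarrow> 0"
        by (rule tendsto_mult_right_zero[OF LIMSEQ_power_zero]) simp
    qed
    then have "(\<lambda>N. y - r N) \<longlonglongrightarrow> y"
      using tendsto_diff[OF tendsto_const, of r 0 sequentially y] by simp
    then have "(\<lambda>N. (\<Sum>k<N. u k, A (\<Sum>k<N. u k))) \<longlonglongrightarrow> (x, y)"
      using x partial by (simp add: tendsto_Pair)
    then have "(x, y) \<in> {(x, A x) | x. x \<in> D}"
      by (rule closed_sequentially[OF clG, rotated]) (use partial in auto)
    then have "x \<in> D" "A x = y" by auto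
    moreover have "norm x \<le> 2 * M * norm y"
    proof (rule LIMSEQ_le_const2[OF tendsto_norm[OF x]])
      have "norm (\<Sum>k<N. u k) \<le> 2 * M * norm y" for N
      proof -
        have "norm (\<Sum>k<N. u k) \<le> (\<Sum>k<N. norm (u k))"
          by (rule norm_sum)
        also have "\<dots> \<le> (\<Sum>k<N. M * norm y * (1/2)^k)"
          using u(2) by (rule sum_mono)
        also have "\<dots> \<le> 2 * M * norm y"
          using sum_le_suminf[OF sums_summable[OF geom], of "{..<N}"] \<open>M > 0\<close> sums_unique[OF geom]
          by simp
        finally show ?thesis .
      qed
      then show "\<exists>N. \<forall>n\<ge>N. norm (\<Sum>k<n. u k) \<le> 2 * M * norm y" by blast
    qed
    ultimately show ?thesis by auto
  qed
  then show ?thesis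
    using that[of "2 * M"] \<open>M > 0\<close> by simp
qed

context
  fixes D :: "'a::{real_inner,complete_space} set" and A :: "'a \<Rightarrow> 'b::{real_inner,complete_space}"
  assumes op: "dd_closed_op D A"
begin

lemma dd_closed_op_linear_on: "linear_on D A"
  and dd_closed_op_dense: "closure D = UNIV"
  using op by (simp_all add: dd_closed_op_def)

lemma closed_ker_op: "closed (ker_op D A)"
  by (simp add: ker_eq_orthogonal_comp_ran_adj[OF op] closed_orthogonal_comp)

lemma friedrichs_inequality:
  assumes clR: "closed (ran_op D A)"
  obtains c where "c > 0" "\<And>x. x \<in> D \<Longrightarrow> x \<in> (ker_op D A)\<^sup>\<bottom> \<Longrightarrow> norm x \<le> c * norm (A x)"
proof -
  obtain M where "M > 0" and M: "\<And>y. y \<in> ran_op D A \<Longrightarrow> \<exists>x\<in>D. A x = y \<and> norm x \<le> M * norm y"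
    using closed_range_bounded_preimage[OF dd_closed_op_linear_on _ clR] op
    by (auto simp: dd_closed_op_def)
  have "norm x \<le> M * norm (A x)" if x: "x \<in> D" "x \<in> (ker_op D A)\<^sup>\<bottom>" for x
  proof -
    obtain x' where x': "x' \<in> D" "A x' = A x" "norm x' \<le> M * norm (A x)"
      using M[of "A x"] x(1) by (auto simp: ran_op_def)
    \<comment> \<open>x is the component of x' orthogonal to the kernel, hence the shorter one.\<close>
    have "x - x' \<in> ker_op D A"
      using ker_op_diff[OF dd_closed_op_linear_on x(1) x'(1)] x'(2) by simp
    then have "inner x (x - x') = 0"
      using x(2) by (simp add: orthogonal_comp_iff)
    then have "(norm x)\<^sup>2 = inner x x'"
      by (simp add: power2_norm_eq_inner inner_diff_right)
    also have "\<dots> \<le> norm x * norm x'"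
      by (rule norm_cauchy_schwarz)
    finally have "norm x \<le> norm x'"
      by (cases "norm x = 0") (auto simp: power2_eq_square)
    with x'(3) show ?thesis by simp
  qed
  with \<open>M > 0\<close> show ?thesis using that by blast
qed

lemma adj_norm_le_on_ran:
  assumes "c \<ge> 0" and bound: "\<And>v. v \<in> D \<Longrightarrow> v \<in> (ker_op D A)\<^sup>\<bottom> \<Longrightarrow> norm v \<le> c * norm (A v)"
    and q: "q \<in> adj_dom D A" "q \<in> ran_op D A"
  shows "norm q \<le> c * norm (adj D A q)"
proof -
  have lin: "linear_on D A" by (rule dd_closed_op_linear_on)
  obtain v where v: "v \<in> D" "q = A v"
    using q(2) by (auto simp: ran_op_def)
  define w where "w = v - oproj (ker_op D A) v"
  have "oproj (ker_op D A) v \<in> ker_op D A"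
    by (rule oproj_in[OF subspace_ker_op[OF lin] closed_ker_op])
  then have w: "w \<in> D" "A w = q"
    using v lin by (auto simp: w_def ker_op_def linear_on_diff subspace_diff linear_on_subspace)
  have "w \<in> (ker_op D A)\<^sup>\<bottom>"
    unfolding w_def by (rule oproj_orthogonal[OF subspace_ker_op[OF lin] closed_ker_op])
  then have nw: "norm w \<le> c * norm q"
    using bound w by metis
  have "(norm q)\<^sup>2 = inner (A w) q"
    using w(2) by (simp add: power2_norm_eq_inner)
  also have "\<dots> = inner w (adj D A q)"
    by (rule inner_adj[OF dd_closed_op_dense q(1) w(1)])
  also have "\<dots> \<le> norm w * norm (adj D A q)"
    by (rule norm_cauchy_schwarz)
  also have "\<dots> \<le> c * norm q * norm (adj D A q)"
    by (intro mult_right_mono nw) simp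
  finally have "norm q * norm q \<le> norm q * (c * norm (adj D A q))"
    by (simp add: power2_eq_square mult_ac)
  then show ?thesis
    using \<open>c \<ge> 0\<close> by (cases "norm q = 0") auto
qed

lemma closed_ran_adj:
  assumes clR: "closed (ran_op D A)"
  shows "closed (ran_op (adj_dom D A) (adj D A))"
  unfolding closed_sequential_limits
proof (intro allI impI, elim conjE)
  have lin: "linear_on D A" and dense: "closure D = UNIV"
    by (rule dd_closed_op_linear_on dd_closed_op_dense)+
  have linS: "linear_on (adj_dom D A) (adj D A)" by (rule linear_on_adj[OF dense])
  have R: "subspace (ran_op D A)" by (rule subspace_ran_op[OF lin])
  obtain c where "c > 0"
    and c: "\<And>x. x \<in> D \<Longrightarrow> x \<in> (ker_op D A)\<^sup>\<bottom> \<Longrightarrow> norm x \<le> c * norm (A x)"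
    using friedrichs_inequality[OF clR] by blast
  fix w l assume w: "\<forall>n. w n \<in> ran_op (adj_dom D A) (adj D A)" and wl: "w \<longlonglongrightarrow> l"
  \<comment> \<open>Replace the preimages of w n by their projections onto R(A): these are Cauchy by the
    adjoint Friedrichs inequality.\<close>
  have "\<forall>n. \<exists>z. z \<in> adj_dom D A \<and> w n = adj D A z"
    using w by (auto simp: ran_op_def)
  then obtain y where y: "\<And>n. y n \<in> adj_dom D A" "\<And>n. w n = adj D A (y n)"
    by metis
  define q where "q n = oproj (ran_op D A) (y n)" for n
  have q: "q n \<in> ran_op D A" "q n \<in> adj_dom D A" "adj D A (q n) = w n" for n
  proof -
    show "q n \<in> ran_op D A"
      unfolding q_def by (rule oproj_in[OF R clR])
    have "y n - q n \<in> ker_op (adj_dom D A) (adj D A)"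
      unfolding q_def ker_adj_eq_orthogonal_comp_ran[OF dense] by (rule oproj_orthogonal[OF R clR])
    then have k: "y n - q n \<in> adj_dom D A" "adj D A (y n - q n) = 0"
      by (simp_all add: ker_op_def)
    show "q n \<in> adj_dom D A"
      using subspace_diff[OF linear_on_subspace[OF linS] y(1)[of n] k(1)] by simp
    show "adj D A (q n) = w n"
      using linear_on_diff[OF linS y(1)[of n] k(1)] k(2) y(2)[of n] by simp
  qed
  have "Cauchy q"
  proof (rule CauchyI)
    fix e :: real assume "e > 0"
    then obtain N where N: "\<forall>m\<ge>N. \<forall>n\<ge>N. norm (w m - w n) < e / c"
      using CauchyD[OF LIMSEQ_imp_Cauchy[OF wl], of "e / c"] \<open>c > 0\<close> by auto
    have "norm (q m - q n) < e" if "m \<ge> N" "n \<ge> N" for m n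
    proof -
      have "q m - q n \<in> adj_dom D A" "adj D A (q m - q n) = w m - w n"
        using q linear_on_diff[OF linS] subspace_diff[OF linear_on_subspace[OF linS]] by auto
      moreover have "q m - q n \<in> ran_op D A"
        using q(1) R by (simp add: subspace_diff)
      ultimately have "norm (q m - q n) \<le> c * norm (w m - w n)"
        using adj_norm_le_on_ran[OF less_imp_le[OF \<open>c > 0\<close>] c] by metis
      also have "\<dots> < c * (e / c)"
        using N that \<open>c > 0\<close> by (intro mult_strict_left_mono) auto
      finally show ?thesis using \<open>c > 0\<close> by simp
    qed
    then show "\<exists>N. \<forall>m\<ge>N. \<forall>n\<ge>N. norm (q m - q n) < e" by blast
  qed
  then obtain q0 where q0: "q \<longlonglongrightarrow> q0"
    using Cauchy_convergent_iff convergent_def by blast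
  have "inner (A x) q0 = inner x l" if "x \<in> D" for x
  proof -
    have "(\<lambda>n. inner (A x) (q n)) \<longlonglongrightarrow> inner (A x) q0"
      by (intro tendsto_inner tendsto_const q0)
    moreover have "(\<lambda>n. inner (A x) (q n)) = (\<lambda>n. inner x (w n))"
      using inner_adj[OF dense q(2) that] q(3) by simp
    moreover have "(\<lambda>n. inner x (w n)) \<longlonglongrightarrow> inner x l"
      by (intro tendsto_inner tendsto_const wl)
    ultimately show ?thesis
      using LIMSEQ_unique by metis
  qed
  then have "q0 \<in> adj_dom D A" "adj D A q0 = l"
    using adjI[OF dense] by blast+
  then show "l \<in> ran_op (adj_dom D A) (adj D A)"
    unfolding ran_op_def by (metis image_eqI)
qed

lemma ran_adj_eq_orthogonal_comp_ker:
  assumes clR: "closed (ran_op D A)"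
  shows "ran_op (adj_dom D A) (adj D A) = (ker_op D A)\<^sup>\<bottom>"
  using orthogonal_comp_orthogonal_comp_closed[OF
      subspace_ran_op[OF linear_on_adj[OF dd_closed_op_dense]] closed_ran_adj[OF clR]]
  by (simp add: ker_eq_orthogonal_comp_ran_adj[OF op])

lemma
  assumes clR: "closed (ran_op D A)"
  shows fp_const_nonneg: "0 \<le> fp_const D A"
    and norm_le_fp_const: "x \<in> D \<Longrightarrow> x \<in> ran_op (adj_dom D A) (adj D A) \<Longrightarrow> norm x \<le> fp_const D A * norm (A x)"
proof -
  define S where "S = {c. 0 < c \<and> (\<forall>x \<in> D \<inter> ran_op (adj_dom D A) (adj D A). norm x \<le> c * norm (A x))}"
  have fp: "fp_const D A = Inf S"
    by (simp add: S_def fp_const_def)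
  obtain c where "c > 0" "\<And>x. x \<in> D \<Longrightarrow> x \<in> (ker_op D A)\<^sup>\<bottom> \<Longrightarrow> norm x \<le> c * norm (A x)"
    using friedrichs_inequality[OF clR] by blast
  then have "c \<in> S"
    by (simp add: S_def ran_adj_eq_orthogonal_comp_ker[OF clR])
  then have "S \<noteq> {}" by blast
  show nonneg: "0 \<le> fp_const D A"
    unfolding fp using \<open>S \<noteq> {}\<close> by (intro cInf_greatest) (auto simp: S_def)
  assume x: "x \<in> D" "x \<in> ran_op (adj_dom D A) (adj D A)"
  show "norm x \<le> fp_const D A * norm (A x)"
  proof (cases "A x = 0")
    case True
    then have "x \<in> ker_op D A \<inter> (ker_op D A)\<^sup>\<bottom>"
      using x by (simp add: ker_op_def ran_adj_eq_orthogonal_comp_ker[OF clR])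
    then have "x = 0"
      using orthogonal_Int_0[OF subspace_ker_op[OF dd_closed_op_linear_on]] by blast
    then show ?thesis using nonneg by simp
  next
    case False
    have "norm x / norm (A x) \<le> Inf S"
      using \<open>S \<noteq> {}\<close> x False by (intro cInf_greatest) (auto simp: S_def divide_le_eq)
    then show ?thesis
      using False by (simp add: fp divide_le_eq mult.commute)
  qed
qed

lemma norm_le_fp_const_adj:
  assumes clR: "closed (ran_op D A)" and "q \<in> adj_dom D A" "q \<in> ran_op D A"
  shows "norm q \<le> fp_const D A * norm (adj D A q)"
  using assms norm_le_fp_const[OF clR] fp_const_nonneg[OF clR]
  by (intro adj_norm_le_on_ran) (simp_all add: ran_adj_eq_orthogonal_comp_ker[OF clR])

end

section \<open>Helmholtz decomposition and the error estimates\<close>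

lemma oproj_sum_of_orthogonal_ranges:
  fixes R1 R2 :: "'a::{real_inner,complete_space} set"
  assumes R1: "subspace R1" "closed R1" and R2: "subspace R2" "closed R2" and orth: "R1 \<subseteq> R2\<^sup>\<bottom>"
    and z: "z \<in> (R1\<^sup>\<bottom> \<inter> R2\<^sup>\<bottom>)\<^sup>\<bottom>"
  shows "z = oproj R1 z + oproj R2 z"
proof -
  define K where "K = R1\<^sup>\<bottom> \<inter> R2\<^sup>\<bottom>"
  define r where "r = z - oproj R1 z - oproj R2 z"
  have a: "oproj R1 z \<in> R1" and b: "oproj R2 z \<in> R2"
    using oproj_in R1 R2 by blast+
  have "oproj R2 z \<in> R1\<^sup>\<bottom>" "oproj R1 z \<in> R2\<^sup>\<bottom>"
    using a b orth orthogonal_comp_subset orthogonal_comp_anti_mono by blast+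
  then have "(z - oproj R1 z) - oproj R2 z \<in> R1\<^sup>\<bottom>" "(z - oproj R2 z) - oproj R1 z \<in> R2\<^sup>\<bottom>"
    using oproj_orthogonal[OF R1] oproj_orthogonal[OF R2]
    by (simp_all add: subspace_diff[OF subspace_orthogonal_comp])
  then have "r \<in> K"
    by (simp add: K_def r_def algebra_simps)
  moreover have "oproj R1 z \<in> K\<^sup>\<bottom>" "oproj R2 z \<in> K\<^sup>\<bottom>"
    using a b orthogonal_comp_subset orthogonal_comp_anti_mono[of K] by (auto simp: K_def)
  then have "r \<in> K\<^sup>\<bottom>"
    using z by (simp add: K_def r_def subspace_diff[OF subspace_orthogonal_comp])
  ultimately have "r = 0"
    using orthogonal_Int_0[OF subspace_inter[OF subspace_orthogonal_comp subspace_orthogonal_comp]]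
    by (auto simp: K_def)
  then show ?thesis by (simp add: r_def algebra_simps)
qed

lemma norm_sq_oproj_sum_of_orthogonal_ranges:
  fixes R1 R2 :: "'a::{real_inner,complete_space} set"
  assumes R1: "subspace R1" "closed R1" and R2: "subspace R2" "closed R2" and orth: "R1 \<subseteq> R2\<^sup>\<bottom>"
    and z: "z \<in> (R1\<^sup>\<bottom> \<inter> R2\<^sup>\<bottom>)\<^sup>\<bottom>"
  shows "(norm z)\<^sup>2 = (norm (oproj R1 z))\<^sup>2 + (norm (oproj R2 z))\<^sup>2"
proof -
  have "orthogonal (oproj R1 z) (oproj R2 z)"
    using oproj_in[OF R1] oproj_in[OF R2] orth by (auto simp: orthogonal_comp_def orthogonal_commute)
  then show ?thesis
    using norm_add_Pythagorean oproj_sum_of_orthogonal_ranges[OF assms] by metis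
qed

lemma sum_of_orthogonal_ranges_eq:
  fixes R1 R2 :: "'a::{real_inner,complete_space} set"
  assumes R1: "subspace R1" "closed R1" and R2: "subspace R2" "closed R2" and orth: "R1 \<subseteq> R2\<^sup>\<bottom>"
  shows "{a + b | a b. a \<in> R1 \<and> b \<in> R2} = (R1\<^sup>\<bottom> \<inter> R2\<^sup>\<bottom>)\<^sup>\<bottom>"
proof (intro set_eqI iffI)
  fix z assume "z \<in> {a + b | a b. a \<in> R1 \<and> b \<in> R2}"
  then obtain a b where "z = a + b" "a \<in> R1" "b \<in> R2" by blast
  then have "a \<in> (R1\<^sup>\<bottom> \<inter> R2\<^sup>\<bottom>)\<^sup>\<bottom>" "b \<in> (R1\<^sup>\<bottom> \<inter> R2\<^sup>\<bottom>)\<^sup>\<bottom>"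
    using orthogonal_comp_subset orthogonal_comp_anti_mono[of "R1\<^sup>\<bottom> \<inter> R2\<^sup>\<bottom>"] by blast+
  then show "z \<in> (R1\<^sup>\<bottom> \<inter> R2\<^sup>\<bottom>)\<^sup>\<bottom>"
    using \<open>z = a + b\<close> subspace_add[OF subspace_orthogonal_comp] by blast
next
  fix z assume "z \<in> (R1\<^sup>\<bottom> \<inter> R2\<^sup>\<bottom>)\<^sup>\<bottom>"
  then show "z \<in> {a + b | a b. a \<in> R1 \<and> b \<in> R2}"
    using oproj_sum_of_orthogonal_ranges[OF R1 R2 orth] oproj_in[OF R1] oproj_in[OF R2] by blast
qed

context
  fixes D :: "'a::{real_inner,complete_space} set" and T :: "'a \<Rightarrow> 'b::real_normed_vector"
    and R :: "'a set"
  assumes lin: "linear_on D T" and R: "subspace R" "closed R" and ker: "ker_op D T = R\<^sup>\<bottom>"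
begin

lemma oproj_eq_solution_in_range:
  assumes "v \<in> R" "v \<in> D" "w \<in> D" "T w = T v" "k \<in> ker_op D T"
  shows "oproj R (w - k) = v"
proof (rule oproj_eqI[OF R(1) \<open>v \<in> R\<close>])
  have "(w - v) - k \<in> ker_op D T"
    using ker_op_diff[OF lin assms(3,2,4)] assms(5) subspace_diff[OF subspace_ker_op[OF lin]] by blast
  then show "w - k - v \<in> R\<^sup>\<bottom>"
    by (simp add: ker algebra_simps)
qed

lemma oproj_shift_solution:
  assumes "w \<in> D"
  shows "oproj R (w - t) + t \<in> D" "T (oproj R (w - t) + t) = T w"
proof -
  have "(w - t) - oproj R (w - t) \<in> ker_op D T"
    using oproj_orthogonal[OF R] ker by simp
  then have n: "(w - t) - oproj R (w - t) \<in> D" "T ((w - t) - oproj R (w - t)) = 0"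
    by (simp_all add: ker_op_def)
  have eq: "oproj R (w - t) + t = w - ((w - t) - oproj R (w - t))" by simp
  show "oproj R (w - t) + t \<in> D"
    unfolding eq using subspace_diff[OF linear_on_subspace[OF lin] assms n(1)] .
  show "T (oproj R (w - t) + t) = T w"
    unfolding eq using linear_on_diff[OF lin assms n(1)] n(2) by simp
qed

lemma norm_oproj_error_le:
  assumes bound: "\<And>q. q \<in> D \<Longrightarrow> q \<in> R \<Longrightarrow> norm q \<le> c * norm (T q)"
    and "w \<in> D" "\<zeta> \<in> D"
  shows "norm (oproj R (w - t)) \<le> c * norm (T \<zeta> - T w) + norm (\<zeta> - t)"
proof -
  \<comment> \<open>Split the error at \<zeta>: the first part is an R-valued solution of a residual equation.\<close>
  define p where "p = oproj R (w - \<zeta>)"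
  have "oproj R (w - t) = p + oproj R (\<zeta> - t)"
    using linear_add[OF linear_oproj[OF R], of "w - \<zeta>" "\<zeta> - t"] by (simp add: p_def)
  moreover have "p \<in> D" "T p = T w - T \<zeta>"
    using oproj_shift_solution[of "w - \<zeta>" 0] subspace_diff[OF linear_on_subspace[OF lin] assms(2,3)]
      linear_on_diff[OF lin assms(2,3)] by (simp_all add: p_def)
  then have "norm p \<le> c * norm (T \<zeta> - T w)"
    using bound[of p] oproj_in[OF R] by (simp add: p_def norm_minus_commute)
  ultimately show ?thesis
    using norm_triangle_ineq[of p "oproj R (\<zeta> - t)"] norm_oproj_le[OF R, of "\<zeta> - t"] by simp
qed

lemma error_component_estimates:
  fixes t :: 'a
  assumes bound: "\<And>q. q \<in> D \<Longrightarrow> q \<in> R \<Longrightarrow> norm q \<le> c * norm (T q)"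
    and x: "x \<in> D" "T x = h" and k: "k \<in> ker_op D T" and v: "oproj R (x - k) = v"
  defines "e \<equiv> x - (k + t)"
  defines "eR \<equiv> oproj R e"
  shows "eR = v - oproj R (k + t) \<and> eR = v - oproj R t
    \<and> eR + (k + t) = x - (e - eR) \<and> eR + t = x - k - (e - eR)
    \<and> eR + (k + t) \<in> D \<and> eR + t \<in> D \<and> T (eR + (k + t)) = h \<and> T (eR + t) = h
    \<and> (\<forall>\<zeta>\<in>D. norm eR \<le> c * norm (T \<zeta> - h) + norm (\<zeta> - (k + t)))
    \<and> c * norm (T (eR + (k + t)) - h) + norm ((eR + (k + t)) - (k + t)) = norm eR
    \<and> (\<forall>\<zeta>\<in>D. norm eR \<le> c * norm (T \<zeta> - h) + norm (\<zeta> - t))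
    \<and> c * norm (T (eR + t) - h) + norm ((eR + t) - t) = norm eR"
proof -
  have kD: "k \<in> D" "T k = 0" and "k \<in> R\<^sup>\<bottom>"
    using k ker by (auto simp: ker_op_def)
  then have Pkt: "oproj R (k + t) = oproj R t"
    using linear_add[OF linear_oproj[OF R]] oproj_eq_0[OF R(1)] by simp
  have xk: "x - k \<in> D" "T (x - k) = h"
    using subspace_diff[OF linear_on_subspace[OF lin] x(1) kD(1)] linear_on_diff[OF lin x(1) kD(1)]
      x(2) kD(2) by simp_all
  have e: "e = (x - k) - t" by (simp add: e_def)
  have "eR = v - oproj R t"
    using linear_diff[OF linear_oproj[OF R], of "x - k" t] v by (simp add: eR_def e)
  moreover have "eR + (k + t) \<in> D" "T (eR + (k + t)) = h"
    using oproj_shift_solution[OF x(1), of "k + t"] x(2) by (simp_all add: eR_def e_def)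
  moreover have "eR + t \<in> D" "T (eR + t) = h"
    using oproj_shift_solution[OF xk(1), of t] xk(2) by (simp_all add: eR_def e)
  moreover have "norm eR \<le> c * norm (T \<zeta> - h) + norm (\<zeta> - (k + t))" if "\<zeta> \<in> D" for \<zeta>
    using norm_oproj_error_le[OF bound x(1) that, of "k + t"] x(2) by (simp add: eR_def e_def)
  moreover have "norm eR \<le> c * norm (T \<zeta> - h) + norm (\<zeta> - t)" if "\<zeta> \<in> D" for \<zeta>
    using norm_oproj_error_le[OF bound xk(1) that, of t] xk(2) by (simp add: eR_def e)
  ultimately show ?thesis
    using Pkt by (simp add: e_def algebra_simps)
qed

end

theorem corollary4p4:
  fixes D0 :: "'h0::{real_inner,complete_space} set" and A0 :: "'h0 \<Rightarrow> 'h1::{real_inner,complete_space}"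
    and D1 :: "'h1 set" and A1 :: "'h1 \<Rightarrow> 'h2::{real_inner,complete_space}"
    and D2 :: "'h2 set" and A2 :: "'h2 \<Rightarrow> 'h3::{real_inner,complete_space}"
    and D3 :: "'h3 set" and A3 :: "'h3 \<Rightarrow> 'h4::{real_inner,complete_space}"
    and f :: 'h3 and g :: 'h1 and k x xt xtp xf xg :: 'h2
  assumes op0: "dd_closed_op D0 A0" and op1: "dd_closed_op D1 A1"
    and op2: "dd_closed_op D2 A2" and op3: "dd_closed_op D3 A3"
    and cx0: "ran_op D0 A0 \<subseteq> ker_op D1 A1"
    and cx1: "ran_op D1 A1 \<subseteq> ker_op D2 A2"
    and cx2: "ran_op D2 A2 \<subseteq> ker_op D3 A3"
    and closed_R1: "closed (ran_op D1 A1)" and closed_R2: "closed (ran_op D2 A2)"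
  defines "D1s \<equiv> adj_dom D1 A1" and "A1s \<equiv> adj D1 A1"
    and "D2s \<equiv> adj_dom D2 A2" and "A2s \<equiv> adj D2 A2"
  defines "K2 \<equiv> ker_op D2 A2 \<inter> ker_op D1s A1s"
  assumes K2_fin: "\<exists>B. finite B \<and> K2 \<subseteq> span B"
  defines "\<pi>2 \<equiv> oproj K2"
    and "\<pi>A1 \<equiv> oproj (ran_op D1 A1)" and "\<pi>A2s \<equiv> oproj (ran_op D2s A2s)"
  defines "\<pi>NA1s \<equiv> (\<lambda>y. y - \<pi>A1 y)" and "\<pi>NA2 \<equiv> (\<lambda>y. y - \<pi>A2s y)"
  defines "c1 \<equiv> fp_const D1 A1" and "c2 \<equiv> fp_const D2 A2"
  assumes f_in: "f \<in> ran_op D2 A2" and g_in: "g \<in> ran_op D1s A1s" and k_in: "k \<in> K2"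
    and xf: "xf \<in> D2 \<inter> ran_op D2s A2s" "A2 xf = f"
    and xg: "xg \<in> D1s \<inter> ran_op D1 A1" "A1s xg = g"
    and x_sol: "x \<in> D2 \<inter> D1s" "A2 x = f" "A1s x = g" "\<pi>2 x = k"
    and xtp: "xtp \<in> orthogonal_comp K2" and xt: "xt = k + xtp"
  defines "e \<equiv> x - xt"
  defines "eA1 \<equiv> \<pi>A1 e" and "eA2s \<equiv> \<pi>A2s e"
  shows
    "(e = xf + xg - xtp \<and> e = eA1 + eA2s
      \<and> {a + b | a b. a \<in> ran_op D1 A1 \<and> b \<in> ran_op D2s A2s} = orthogonal_comp K2
      \<and> e \<in> orthogonal_comp K2 \<and> \<pi>2 e = 0
      \<and> (norm e)\<^sup>2 = (norm eA1)\<^sup>2 + (norm eA2s)\<^sup>2)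
   \<and> (eA1 = xg - \<pi>A1 xt \<and> eA1 = xg - \<pi>A1 xtp
      \<and> eA1 + xt = x - \<pi>NA1s e \<and> eA1 + xtp = x - k - \<pi>NA1s e
      \<and> eA1 + xt \<in> D1s \<and> eA1 + xtp \<in> D1s
      \<and> A1s (eA1 + xt) = g \<and> A1s (eA1 + xtp) = g
      \<and> (\<forall>\<zeta>\<in>D1s. norm eA1 \<le> c1 * norm (A1s \<zeta> - g) + norm (\<zeta> - xt))
      \<and> c1 * norm (A1s (eA1 + xt) - g) + norm ((eA1 + xt) - xt) = norm eA1
      \<and> (\<forall>\<zeta>\<in>D1s. norm eA1 \<le> c1 * norm (A1s \<zeta> - g) + norm (\<zeta> - xtp))
      \<and> c1 * norm (A1s (eA1 + xtp) - g) + norm ((eA1 + xtp) - xtp) = norm eA1)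
   \<and> (eA2s = xf - \<pi>A2s xt \<and> eA2s = xf - \<pi>A2s xtp
      \<and> eA2s + xt = x - \<pi>NA2 e \<and> eA2s + xtp = x - k - \<pi>NA2 e
      \<and> eA2s + xt \<in> D2 \<and> eA2s + xtp \<in> D2
      \<and> A2 (eA2s + xt) = f \<and> A2 (eA2s + xtp) = f
      \<and> (\<forall>\<xi>\<in>D2. norm eA2s \<le> c2 * norm (A2 \<xi> - f) + norm (\<xi> - xt))
      \<and> c2 * norm (A2 (eA2s + xt) - f) + norm ((eA2s + xt) - xt) = norm eA2s
      \<and> (\<forall>\<xi>\<in>D2. norm eA2s \<le> c2 * norm (A2 \<xi> - f) + norm (\<xi> - xtp))
      \<and> c2 * norm (A2 (eA2s + xtp) - f) + norm ((eA2s + xtp) - xtp) = norm eA2s)"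
proof -
  let ?R1 = "ran_op D1 A1" and ?R2 = "ran_op D2s A2s"
  have lin1s: "linear_on D1s A1s"
    unfolding D1s_def A1s_def by (rule linear_on_adj[OF dd_closed_op_dense[OF op1]])
  have lin2: "linear_on D2 A2" by (rule dd_closed_op_linear_on[OF op2])
  have R1: "subspace ?R1" "closed ?R1"
    using subspace_ran_op[OF dd_closed_op_linear_on[OF op1]] closed_R1 by auto
  have R2: "subspace ?R2" "closed ?R2"
    unfolding D2s_def A2s_def
    using subspace_ran_op[OF linear_on_adj[OF dd_closed_op_dense[OF op2]]] closed_ran_adj[OF op2 closed_R2]
    by auto
  have N1s: "ker_op D1s A1s = ?R1\<^sup>\<bottom>"
    unfolding D1s_def A1s_def by (rule ker_adj_eq_orthogonal_comp_ran[OF dd_closed_op_dense[OF op1]])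
  have N2: "ker_op D2 A2 = ?R2\<^sup>\<bottom>"
    unfolding D2s_def A2s_def by (rule ker_eq_orthogonal_comp_ran_adj[OF op2])
  have orth: "?R1 \<subseteq> ?R2\<^sup>\<bottom>" using cx1 N2 by simp
  have K2: "K2 = ?R1\<^sup>\<bottom> \<inter> ?R2\<^sup>\<bottom>" by (simp add: K2_def N1s N2 Int_commute)
  have "subspace K2" "closed K2"
    unfolding K2 by (simp_all add: subspace_inter subspace_orthogonal_comp closed_Int closed_orthogonal_comp)
  have bound1: "norm q \<le> c1 * norm (A1s q)" if "q \<in> D1s" "q \<in> ?R1" for q
    using norm_le_fp_const_adj[OF op1 closed_R1] that by (simp add: c1_def D1s_def A1s_def)
  have bound2: "norm q \<le> c2 * norm (A2 q)" if "q \<in> D2" "q \<in> ?R2" for q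
    using norm_le_fp_const[OF op2 closed_R2] that by (simp add: c2_def D2s_def A2s_def)
  have k: "k \<in> ker_op D1s A1s" "k \<in> ker_op D2 A2" using k_in by (simp_all add: K2_def)
  have x: "x \<in> D1s" "x \<in> D2" using x_sol(1) by simp_all
  have "x - k \<in> K2\<^sup>\<bottom>"
    using oproj_orthogonal[OF \<open>subspace K2\<close> \<open>closed K2\<close>, of x] x_sol(4) by (simp add: \<pi>2_def)
  have xg_eq: "\<pi>A1 (x - k) = xg"
    unfolding \<pi>A1_def using x_sol xg k(1)
    by (intro oproj_eq_solution_in_range[OF lin1s R1 N1s]) auto
  have xf_eq: "\<pi>A2s (x - k) = xf"
    unfolding \<pi>A2s_def using x_sol xf k(2)
    by (intro oproj_eq_solution_in_range[OF lin2 R2 N2]) auto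
  have decomp: "z = \<pi>A1 z + \<pi>A2s z" if "z \<in> K2\<^sup>\<bottom>" for z
    using oproj_sum_of_orthogonal_ranges[OF R1 R2 orth] that by (simp add: K2 \<pi>A1_def \<pi>A2s_def)
  have "x - k = xg + xf"
    using decomp[OF \<open>x - k \<in> K2\<^sup>\<bottom>\<close>] xg_eq xf_eq by simp
  then have "e = xf + xg - xtp"
    by (simp add: e_def xt algebra_simps)
  have "e \<in> K2\<^sup>\<bottom>"
    using subspace_diff[OF subspace_orthogonal_comp \<open>x - k \<in> K2\<^sup>\<bottom>\<close> xtp] by (simp add: e_def xt diff_diff_eq)
  show ?thesis
    using error_component_estimates[OF lin1s R1 N1s bound1 x(1) x_sol(3) k(1) xg_eq[unfolded \<pi>A1_def], of xtp]
      error_component_estimates[OF lin2 R2 N2 bound2 x(2) x_sol(2) k(2) xf_eq[unfolded \<pi>A2s_def], of xtp]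
      sum_of_orthogonal_ranges_eq[OF R1 R2 orth] oproj_eq_0[OF \<open>subspace K2\<close> \<open>e \<in> K2\<^sup>\<bottom>\<close>]
      norm_sq_oproj_sum_of_orthogonal_ranges[OF R1 R2 orth] decomp[OF \<open>e \<in> K2\<^sup>\<bottom>\<close>]
      \<open>e \<in> K2\<^sup>\<bottom>\<close> \<open>e = xf + xg - xtp\<close>
    unfolding eA1_def eA2s_def \<pi>A1_def \<pi>A2s_def \<pi>NA1s_def \<pi>NA2_def \<pi>2_def e_def xt K2[symmetric]
    by blast
qed

end
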